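(* Under the assumptions on $(\xi_t,\zeta_t)_{t=1}^L$, $Q$, $R$, $\sigma_\zeta$, $\gamma_0$ stated in the context, define for $k\ge0$ the processes $\rho^k_0=0$, $\rho^k_t=(I-\gamma_tQ)\rho^k_{t-1}+\gamma_t\zeta^k_t$ ($t\in[L]$), where $\zeta^0_t:=\zeta_t$ and $\zeta^k_t:=(Q-\xi_t\xi_t^\top)\rho^{k-1}_{t-1}$ for $k\ge1$. Then for all $k\ge0$ and $t\in[L]$, $$\mathbb E[\zeta^k_t\zeta^{k\top}_t]\preceq\sigma_\zeta^2\gamma_0^kR^{2k}Q\qquad\text{and}\qquad\mathbb E[\rho^k_t\rho^{k\top}_t]\preceq\sigma_\zeta^2\gamma_0^{k+1}R^{2k}I.$$
   Context: Assumptions: $(\xi_t,\zeta_t)_{t=1}^L$ are independent pairs of random vectors in $\mathbb R^M$ with $\mathbb E[\xi_t\xi_t^\top]=Q$, $\mathbb E[\zeta_t]=0$, $\mathbb E[\xi_t\xi_t^\top\xi_t\xi_t^\top]\preceq R^2Q$, $\mathbb E[\zeta_t\zeta_t^\top]\preceq\sigma_\zeta^2Q$, and $\gamma_0R^2\le1/4$. Stepsizes: $\gamma_t=\gamma_0/2^{\ell}$ with $\ell=\lfloor t/(L/\log L)\rfloor$ ($\log$ base 2), $t=1,\dots,L$. $\preceq$ is the Loewner order, $[L]=\{1,\dots,L\}$. *)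

theory Defs
  imports "HOL-Probability.Probability"
begin

definition outer :: "real^'n \<Rightarrow> real^'n \<Rightarrow> real^'n^'n" where
  "outer x y = (\<chi> i j. x $ i * y $ j)"

definition loewner_le :: "real^'n^'n \<Rightarrow> real^'n^'n \<Rightarrow> bool" where
  "loewner_le A B \<longleftrightarrow> (\<forall>v. v \<bullet> ((B - A) *v v) \<ge> 0)"

definition stepsize :: "real \<Rightarrow> nat \<Rightarrow> nat \<Rightarrow> real" where
  "stepsize g0 L t = g0 / 2 ^ nat \<lfloor>real t / (real L / log 2 (real L))\<rfloor>"

fun rho :: "(nat \<Rightarrow> real) \<Rightarrow> real^'n^'n \<Rightarrow> (nat \<Rightarrow> 'a \<Rightarrow> real^'n) \<Rightarrow> (nat \<Rightarrow> 'a \<Rightarrow> real^'n)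
            \<Rightarrow> nat \<Rightarrow> nat \<Rightarrow> 'a \<Rightarrow> real^'n" where
  "rho g Q xi ze k 0 \<omega> = 0"
| "rho g Q xi ze k (Suc t) \<omega> =
     (mat 1 - g (Suc t) *\<^sub>R Q) *v rho g Q xi ze k t \<omega>
     + g (Suc t) *\<^sub>R (case k of 0 \<Rightarrow> ze (Suc t) \<omega>
                          | Suc j \<Rightarrow> (Q - outer (xi (Suc t) \<omega>) (xi (Suc t) \<omega>)) *v rho g Q xi ze j t \<omega>)"

definition zetak :: "(nat \<Rightarrow> real) \<Rightarrow> real^'n^'n \<Rightarrow> (nat \<Rightarrow> 'a \<Rightarrow> real^'n) \<Rightarrow> (nat \<Rightarrow> 'a \<Rightarrow> real^'n)
            \<Rightarrow> nat \<Rightarrow> nat \<Rightarrow> 'a \<Rightarrow> real^'n" where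
  "zetak g Q xi ze k t \<omega> = (case k of 0 \<Rightarrow> ze t \<omega>
       | Suc j \<Rightarrow> (Q - outer (xi t \<omega>) (xi t \<omega>)) *v rho g Q xi ze j (t - 1) \<omega>)"

end

(* Induction on t, simultaneously for all k.  For k >= 1 write v . zeta^k_t = a . rho^(k-1)_(t-1)
   with a = (Q - xi_t xi_t^T)^T v.  The iterate rho^(k-1)_(t-1) is a function of the data before
   time t, hence independent of a, so the bound E[rho rho^T] <= c I gives
   E[(v . zeta^k_t)^2] <= c E|a|^2 <= c R^2 v^T Q v, because
   E|a|^2 = E[(v . xi)^2 |xi|^2] - |Q^T v|^2.  For rho, v . rho^k_t = w . rho^k_(t-1) + gamma_t v . zeta^k_t
   with w = (I - gamma_t Q)^T v; the cross term has mean zero since E a = 0 and E zeta_t = 0, and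
   |w|^2 = |v|^2 - 2 gamma_t v^T Q v + gamma_t^2 |Q^T v|^2 together with gamma_t <= gamma_0 and
   gamma_0 R^2 <= 1/4 shows that the bound sigma^2 gamma_0^(k+1) R^(2k) |v|^2 propagates. *)

theory Submission
  imports Defs
begin

section \<open>Outer products and quadratic forms\<close>

lemma outer_mult_vec: "outer p p *v v = (p \<bullet> v) *\<^sub>R p"
  by (simp add: vec_eq_iff outer_def matrix_vector_mult_def inner_vec_def sum_distrib_left mult_ac)

lemma inner_outer_mult_vec: "u \<bullet> (outer p p *v v) = (u \<bullet> p) * (p \<bullet> v)"
  by (simp add: outer_mult_vec)

lemma inner_outer_outer_mult_vec: "v \<bullet> ((outer p p ** outer p p) *v v) = (v \<bullet> p)\<^sup>2 * (p \<bullet> p)"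
  by (simp add: outer_mult_vec matrix_vector_mul_assoc[symmetric] inner_commute power2_eq_square mult_ac)

lemma norm_outer_self: "norm (outer x x) = (norm x)\<^sup>2"
proof -
  have "norm (outer x x) = L2_set (\<lambda>i. \<bar>x $ i\<bar> * norm x) UNIV"
    unfolding norm_vec_def outer_def by (simp add: abs_mult L2_set_right_distrib)
  also have "\<dots> = L2_set (\<lambda>i. norm (x $ i)) UNIV * norm x"
    by (simp add: L2_set_left_distrib)
  finally show ?thesis by (simp add: norm_vec_def power2_eq_square)
qed

lemma vector_matrix_mult_diff_outer: "v v* (Q - outer p p) = v v* Q - (v \<bullet> p) *\<^sub>R p"
  by (simp add: vec_eq_iff vector_matrix_mult_def outer_def inner_vec_def sum_subtractf
      right_diff_distrib sum_distrib_left mult_ac)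

lemma loewner_le_iff: "loewner_le A B \<longleftrightarrow> (\<forall>v. v \<bullet> (A *v v) \<le> v \<bullet> (B *v v))"
  unfolding loewner_le_def by (simp add: matrix_vector_mult_diff_rdistrib inner_diff_right)

lemma square_inner_eq_double_sum:
  "(u \<bullet> x)\<^sup>2 = (\<Sum>i\<in>UNIV. \<Sum>l\<in>UNIV. (u $ i * u $ l) * (x $ i * x $ l))"
  by (simp add: inner_vec_def power2_eq_square sum_product mult_ac)

lemma bounded_linear_quadratic_form: "bounded_linear (\<lambda>A::real^'n^'m. u \<bullet> (A *v v))"
proof -
  have "linear (\<lambda>A::real^'n^'m. A *v v)"
    by (auto simp: linear_iff matrix_vector_mult_add_rdistrib simp flip: scaleR_matrix_vector_assoc)
  then show ?thesis
    by (intro bounded_linear_compose[OF bounded_linear_inner_right] linear_conv_bounded_linear[THEN iffD1])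
qed

lemma bounded_linear_vector_matrix_mult: "bounded_linear (\<lambda>A::real^'m^'n. v v* A)"
  by (auto intro!: linear_conv_bounded_linear[THEN iffD1]
      simp: linear_iff vector_matrix_mult_add_rdistrib vector_scaleR_matrix_ac)

section \<open>Second moments of random vectors\<close>

lemma borel_measurable_vec_nth[measurable]:
  fixes F :: "'b \<Rightarrow> 'c::real_normed_vector^'n"
  assumes "F \<in> borel_measurable N"
  shows "(\<lambda>\<omega>. F \<omega> $ i) \<in> borel_measurable N"
  by (rule borel_measurable_continuous_on[OF linear_continuous_on[OF bounded_linear_vec_nth] assms])

lemma borel_measurable_vecI:
  fixes F :: "'b \<Rightarrow> real^'n"
  assumes "\<And>i. (\<lambda>\<omega>. F \<omega> $ i) \<in> borel_measurable N"
  shows "F \<in> borel_measurable N"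
  using assms by (subst borel_measurable_euclidean_space) (auto simp: Basis_vec_def cart_eq_inner_axis[symmetric])

lemma borel_measurable_matrix_vector_mult[measurable]:
  fixes A :: "'b \<Rightarrow> real^'n^'m"
  assumes [measurable]: "A \<in> borel_measurable N" "f \<in> borel_measurable N"
  shows "(\<lambda>\<omega>. A \<omega> *v f \<omega>) \<in> borel_measurable N"
  by (rule borel_measurable_vecI) (simp add: matrix_vector_mult_def)

lemma borel_measurable_outer[measurable]:
  assumes "f \<in> borel_measurable N"
  shows "(\<lambda>\<omega>. outer (f \<omega>) (f \<omega>)) \<in> borel_measurable N"
proof -
  have "continuous_on UNIV (\<lambda>x::real^'n. outer x x)"
    unfolding outer_def by (intro continuous_intros)
  from borel_measurable_continuous_on[OF this assms] show ?thesis .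
qed

lemma borel_measurable_vector_matrix_mult[measurable]:
  fixes A :: "'b \<Rightarrow> real^'m^'n"
  assumes "A \<in> borel_measurable N"
  shows "(\<lambda>\<omega>. v v* A \<omega>) \<in> borel_measurable N"
  by (rule borel_measurable_continuous_on[OF linear_continuous_on[OF bounded_linear_vector_matrix_mult] assms])

lemma integrable_vecI:
  fixes F :: "'b \<Rightarrow> real^'n"
  assumes "\<And>i. integrable N (\<lambda>\<omega>. F \<omega> $ i)"
  shows "integrable N F"
proof -
  have "integrable N (\<lambda>\<omega>. \<Sum>b\<in>Basis. (F \<omega> \<bullet> b) *\<^sub>R b)"
    using assms by (auto simp: Basis_vec_def cart_eq_inner_axis[symmetric])
  then show ?thesis by (simp add: euclidean_representation)
qed

lemma integrable_mult_of_square_integrable: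
  fixes f g :: "'b \<Rightarrow> real"
  assumes [measurable]: "f \<in> borel_measurable N" "g \<in> borel_measurable N"
    and "integrable N (\<lambda>\<omega>. (f \<omega>)\<^sup>2)" "integrable N (\<lambda>\<omega>. (g \<omega>)\<^sup>2)"
  shows "integrable N (\<lambda>\<omega>. f \<omega> * g \<omega>)"
proof (rule Bochner_Integration.integrable_bound)
  show "integrable N (\<lambda>\<omega>. (f \<omega>)\<^sup>2 + (g \<omega>)\<^sup>2)" using assms by auto
  show "AE \<omega> in N. norm (f \<omega> * g \<omega>) \<le> norm ((f \<omega>)\<^sup>2 + (g \<omega>)\<^sup>2)"
  proof (intro AE_I2)
    fix \<omega>
    have "2 * \<bar>f \<omega>\<bar> * \<bar>g \<omega>\<bar> \<le> (f \<omega>)\<^sup>2 + (g \<omega>)\<^sup>2"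
      using sum_squares_bound[of "\<bar>f \<omega>\<bar>" "\<bar>g \<omega>\<bar>"] by simp
    moreover have "0 \<le> \<bar>f \<omega>\<bar> * \<bar>g \<omega>\<bar>" by simp
    ultimately have "\<bar>f \<omega>\<bar> * \<bar>g \<omega>\<bar> \<le> (f \<omega>)\<^sup>2 + (g \<omega>)\<^sup>2" by linarith
    then show "norm (f \<omega> * g \<omega>) \<le> norm ((f \<omega>)\<^sup>2 + (g \<omega>)\<^sup>2)"
      by (simp add: abs_mult)
  qed
qed measurable

lemma integrable_nth_mult_of_inner_self:
  fixes A :: "'b \<Rightarrow> real^'n"
  assumes [measurable]: "A \<in> borel_measurable N" and int: "integrable N (\<lambda>\<omega>. A \<omega> \<bullet> A \<omega>)"
  shows "integrable N (\<lambda>\<omega>. A \<omega> $ i * A \<omega> $ l)"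
proof (rule Bochner_Integration.integrable_bound[OF int])
  show "AE \<omega> in N. norm (A \<omega> $ i * A \<omega> $ l) \<le> norm (A \<omega> \<bullet> A \<omega>)"
    by (intro AE_I2) (simp add: abs_mult power2_eq_square mult_mono component_le_norm_cart flip: power2_norm_eq_inner)
qed measurable

(* E[X X^T] <= B in the Loewner order, tested on quadratic forms so that it also records
   square integrability. *)
definition second_moment_le :: "'a measure \<Rightarrow> ('a \<Rightarrow> real^'n) \<Rightarrow> real^'n^'n \<Rightarrow> bool" where
  "second_moment_le M X B \<longleftrightarrow> X \<in> borel_measurable M \<and>
     (\<forall>v. integrable M (\<lambda>\<omega>. (v \<bullet> X \<omega>)\<^sup>2) \<and> (\<integral>\<omega>. (v \<bullet> X \<omega>)\<^sup>2 \<partial>M) \<le> v \<bullet> (B *v v))"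

lemma second_moment_leI:
  assumes "X \<in> borel_measurable M" and "\<And>v. integrable M (\<lambda>\<omega>. (v \<bullet> X \<omega>)\<^sup>2)"
    and "\<And>v. (\<integral>\<omega>. (v \<bullet> X \<omega>)\<^sup>2 \<partial>M) \<le> v \<bullet> (B *v v)"
  shows "second_moment_le M X B"
  using assms by (simp add: second_moment_le_def)

lemma second_moment_leD:
  assumes "second_moment_le M X B"
  shows second_moment_le_measurable: "X \<in> borel_measurable M"
    and second_moment_le_integrable: "integrable M (\<lambda>\<omega>. (v \<bullet> X \<omega>)\<^sup>2)"
    and second_moment_le_bound: "(\<integral>\<omega>. (v \<bullet> X \<omega>)\<^sup>2 \<partial>M) \<le> v \<bullet> (B *v v)"
  using assms by (simp_all add: second_moment_le_def)

lemma second_moment_le_integrable_inner_mult: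
  assumes "second_moment_le M X B" and "second_moment_le M Y C"
  shows "integrable M (\<lambda>\<omega>. (u \<bullet> X \<omega>) * (w \<bullet> Y \<omega>))"
  using assms by (intro integrable_mult_of_square_integrable) (auto dest: second_moment_leD)

lemma second_moment_le_integrable_nth_mult:
  assumes "second_moment_le M X B" and "second_moment_le M Y C"
  shows "integrable M (\<lambda>\<omega>. X \<omega> $ i * Y \<omega> $ l)"
  using second_moment_le_integrable_inner_mult[OF assms, of "axis i 1" "axis l 1"]
  by (simp add: inner_axis')

lemma second_moment_le_outer:
  assumes "second_moment_le M X B"
  shows "integrable M (\<lambda>\<omega>. outer (X \<omega>) (X \<omega>))"
    and "loewner_le (\<integral>\<omega>. outer (X \<omega>) (X \<omega>) \<partial>M) B"
proof -
  note [measurable] = second_moment_le_measurable[OF assms]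
  have norm_eq: "(norm x)\<^sup>2 = (\<Sum>b\<in>Basis. (b \<bullet> x)\<^sup>2)" for x :: "real^'n"
    unfolding power2_norm_eq_inner by (subst euclidean_inner) (simp add: inner_commute power2_eq_square)
  have "integrable M (\<lambda>\<omega>. (norm (X \<omega>))\<^sup>2)"
    unfolding norm_eq using second_moment_le_integrable[OF assms] by auto
  then show int: "integrable M (\<lambda>\<omega>. outer (X \<omega>) (X \<omega>))"
    by (rule Bochner_Integration.integrable_bound) (auto simp: norm_outer_self)
  show "loewner_le (\<integral>\<omega>. outer (X \<omega>) (X \<omega>) \<partial>M) B"
    unfolding loewner_le_iff
    using integral_bounded_linear[OF bounded_linear_quadratic_form int] second_moment_le_bound[OF assms]
    by (simp add: inner_outer_mult_vec inner_commute power2_eq_square)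
qed

lemma second_moment_le_of_outer:
  assumes "X \<in> borel_measurable M" and int: "integrable M (\<lambda>\<omega>. outer (X \<omega>) (X \<omega>))"
    and le: "loewner_le (\<integral>\<omega>. outer (X \<omega>) (X \<omega>) \<partial>M) B"
  shows "second_moment_le M X B"
proof (rule second_moment_leI)
  fix v
  have square_eq: "(v \<bullet> X \<omega>)\<^sup>2 = v \<bullet> (outer (X \<omega>) (X \<omega>) *v v)" for \<omega>
    by (simp add: inner_outer_mult_vec inner_commute power2_eq_square)
  show "integrable M (\<lambda>\<omega>. (v \<bullet> X \<omega>)\<^sup>2)"
    unfolding square_eq by (rule integrable_bounded_linear[OF bounded_linear_quadratic_form int])
  show "(\<integral>\<omega>. (v \<bullet> X \<omega>)\<^sup>2 \<partial>M) \<le> v \<bullet> (B *v v)"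
    unfolding square_eq integral_bounded_linear[OF bounded_linear_quadratic_form int]
    using le by (simp add: loewner_le_iff)
qed (use assms in simp)

lemma (in prob_space) indep_var_inner_square_le:
  fixes X A :: "'a \<Rightarrow> real^'n"
  assumes indep: "indep_var borel X borel A"
    and X: "second_moment_le M X (c *\<^sub>R mat 1)"
    and [measurable]: "A \<in> borel_measurable M"
    and intA: "integrable M (\<lambda>\<omega>. A \<omega> \<bullet> A \<omega>)"
  shows "integrable M (\<lambda>\<omega>. (A \<omega> \<bullet> X \<omega>)\<^sup>2)"
    and "(\<integral>\<omega>. (A \<omega> \<bullet> X \<omega>)\<^sup>2 \<partial>M) \<le> c * (\<integral>\<omega>. A \<omega> \<bullet> A \<omega> \<partial>M)"
proof -
  note [measurable] = second_moment_le_measurable[OF X]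
  define S where "S i l = (\<integral>\<omega>. X \<omega> $ i * X \<omega> $ l \<partial>M)" for i l
  have intX: "integrable M (\<lambda>\<omega>. X \<omega> $ i * X \<omega> $ l)" for i l
    by (rule second_moment_le_integrable_nth_mult[OF X X])
  have intA': "integrable M (\<lambda>\<omega>. A \<omega> $ i * A \<omega> $ l)" for i l
    by (rule integrable_nth_mult_of_inner_self[OF _ intA]) measurable
  have product_moment: "integrable M (\<lambda>\<omega>. (X \<omega> $ i * X \<omega> $ l) * (A \<omega> $ i * A \<omega> $ l))
      \<and> (\<integral>\<omega>. (X \<omega> $ i * X \<omega> $ l) * (A \<omega> $ i * A \<omega> $ l) \<partial>M)
          = S i l * (\<integral>\<omega>. A \<omega> $ i * A \<omega> $ l \<partial>M)" for i l
  proof -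
    have "(\<lambda>x::real^'n. x $ i * x $ l) \<in> borel_measurable borel" by measurable
    from indep_var_compose[OF indep this this]
    have "indep_var borel (\<lambda>\<omega>. X \<omega> $ i * X \<omega> $ l) borel (\<lambda>\<omega>. A \<omega> $ i * A \<omega> $ l)"
      by (simp add: comp_def)
    then show ?thesis
      using indep_var_integrable indep_var_lebesgue_integral intX intA' unfolding S_def by blast
  qed
  have square_eq: "(A \<omega> \<bullet> X \<omega>)\<^sup>2
      = (\<Sum>i\<in>UNIV. \<Sum>l\<in>UNIV. (X \<omega> $ i * X \<omega> $ l) * (A \<omega> $ i * A \<omega> $ l))" for \<omega>
    by (simp add: square_inner_eq_double_sum mult.commute)
  show "integrable M (\<lambda>\<omega>. (A \<omega> \<bullet> X \<omega>)\<^sup>2)"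
    unfolding square_eq using product_moment by auto
  have "(\<integral>\<omega>. (A \<omega> \<bullet> X \<omega>)\<^sup>2 \<partial>M)
      = (\<integral>\<omega>. (\<Sum>i\<in>UNIV. \<Sum>l\<in>UNIV. (A \<omega> $ i * A \<omega> $ l) * S i l) \<partial>M)"
    unfolding square_eq using product_moment intA' by (simp add: integral_sum mult.commute)
  also have "\<dots> \<le> (\<integral>\<omega>. c * (A \<omega> \<bullet> A \<omega>) \<partial>M)"
  proof (rule integral_mono)
    show "integrable M (\<lambda>\<omega>. \<Sum>i\<in>UNIV. \<Sum>l\<in>UNIV. (A \<omega> $ i * A \<omega> $ l) * S i l)"
      using intA' by auto
    show "integrable M (\<lambda>\<omega>. c * (A \<omega> \<bullet> A \<omega>))" using intA by auto
    fix \<omega>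
    have "(\<Sum>i\<in>UNIV. \<Sum>l\<in>UNIV. (A \<omega> $ i * A \<omega> $ l) * S i l) = (\<integral>\<omega>'. (A \<omega> \<bullet> X \<omega>')\<^sup>2 \<partial>M)"
      unfolding square_inner_eq_double_sum S_def using intX by (simp add: integral_sum)
    also have "\<dots> \<le> c * (A \<omega> \<bullet> A \<omega>)"
      using second_moment_le_bound[OF X] by (simp flip: scaleR_matrix_vector_assoc)
    finally show "(\<Sum>i\<in>UNIV. \<Sum>l\<in>UNIV. (A \<omega> $ i * A \<omega> $ l) * S i l) \<le> c * (A \<omega> \<bullet> A \<omega>)" .
  qed
  finally show "(\<integral>\<omega>. (A \<omega> \<bullet> X \<omega>)\<^sup>2 \<partial>M) \<le> c * (\<integral>\<omega>. A \<omega> \<bullet> A \<omega> \<partial>M)" by simp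
qed

lemma (in prob_space) indep_var_integral_inner_eq_0:
  fixes A Y :: "'a \<Rightarrow> real^'n"
  assumes indep: "indep_var borel Y borel A"
    and intY: "integrable M Y" and intA: "integrable M A" and mean: "(\<integral>\<omega>. A \<omega> \<partial>M) = 0"
  shows "integrable M (\<lambda>\<omega>. A \<omega> \<bullet> Y \<omega>)" and "(\<integral>\<omega>. A \<omega> \<bullet> Y \<omega> \<partial>M) = 0"
proof -
  have indep_nth: "indep_var borel (\<lambda>\<omega>. Y \<omega> $ i) borel (\<lambda>\<omega>. A \<omega> $ i)" for i
  proof -
    have "(\<lambda>x::real^'n. x $ i) \<in> borel_measurable borel" by measurable
    from indep_var_compose[OF indep this this] show ?thesis by (simp add: comp_def)
  qed
  have nth: "integrable M (\<lambda>\<omega>. Y \<omega> $ i)" "integrable M (\<lambda>\<omega>. A \<omega> $ i)"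
    "(\<integral>\<omega>. A \<omega> $ i \<partial>M) = 0" for i
    using integrable_bounded_linear[OF bounded_linear_vec_nth intY]
      integrable_bounded_linear[OF bounded_linear_vec_nth intA]
      integral_bounded_linear[OF bounded_linear_vec_nth intA] mean
    by simp_all
  have inner_eq: "A \<omega> \<bullet> Y \<omega> = (\<Sum>i\<in>UNIV. Y \<omega> $ i * A \<omega> $ i)" for \<omega>
    by (simp add: inner_vec_def mult.commute)
  show "integrable M (\<lambda>\<omega>. A \<omega> \<bullet> Y \<omega>)"
    unfolding inner_eq using indep_var_integrable[OF indep_nth nth(1,2)] by auto
  show "(\<integral>\<omega>. A \<omega> \<bullet> Y \<omega> \<partial>M) = 0"
    unfolding inner_eq
    using indep_var_integrable[OF indep_nth nth(1,2)] indep_var_lebesgue_integral[OF indep_nth nth(1,2)] nth(3)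
    by (simp add: integral_sum)
qed

lemma (in prob_space) integral_covariance_defect_eq_0:
  fixes \<xi> :: "'a \<Rightarrow> real^'n"
  assumes int2: "integrable M (\<lambda>\<omega>. outer (\<xi> \<omega>) (\<xi> \<omega>))"
    and cov: "(\<integral>\<omega>. outer (\<xi> \<omega>) (\<xi> \<omega>) \<partial>M) = Q"
  shows "integrable M (\<lambda>\<omega>. v v* (Q - outer (\<xi> \<omega>) (\<xi> \<omega>)))"
    and "(\<integral>\<omega>. v v* (Q - outer (\<xi> \<omega>) (\<xi> \<omega>)) \<partial>M) = 0"
proof -
  have int_defect: "integrable M (\<lambda>\<omega>. Q - outer (\<xi> \<omega>) (\<xi> \<omega>))"
    using int2 by auto
  show "integrable M (\<lambda>\<omega>. v v* (Q - outer (\<xi> \<omega>) (\<xi> \<omega>)))"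
    by (rule integrable_bounded_linear[OF bounded_linear_vector_matrix_mult int_defect])
  show "(\<integral>\<omega>. v v* (Q - outer (\<xi> \<omega>) (\<xi> \<omega>)) \<partial>M) = 0"
    unfolding integral_bounded_linear[OF bounded_linear_vector_matrix_mult int_defect]
    using int2 by (simp add: cov prob_space)
qed

lemma (in prob_space) covariance_defect_second_moment:
  fixes \<xi> :: "'a \<Rightarrow> real^'n" and v :: "real^'n"
  assumes [measurable]: "\<xi> \<in> borel_measurable M"
    and int2: "integrable M (\<lambda>\<omega>. outer (\<xi> \<omega>) (\<xi> \<omega>))"
    and int4: "integrable M (\<lambda>\<omega>. outer (\<xi> \<omega>) (\<xi> \<omega>) ** outer (\<xi> \<omega>) (\<xi> \<omega>))"
    and cov: "(\<integral>\<omega>. outer (\<xi> \<omega>) (\<xi> \<omega>) \<partial>M) = Q"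
    and fourth: "loewner_le (\<integral>\<omega>. outer (\<xi> \<omega>) (\<xi> \<omega>) ** outer (\<xi> \<omega>) (\<xi> \<omega>) \<partial>M) (R\<^sup>2 *\<^sub>R Q)"
  defines "a \<equiv> \<lambda>\<omega>. v v* (Q - outer (\<xi> \<omega>) (\<xi> \<omega>))"
  shows "0 \<le> v \<bullet> (Q *v v)"
    and "integrable M (\<lambda>\<omega>. a \<omega> \<bullet> a \<omega>)"
    and "(\<integral>\<omega>. a \<omega> \<bullet> a \<omega> \<partial>M) \<le> R\<^sup>2 * (v \<bullet> (Q *v v))"
    and "(v v* Q) \<bullet> (v v* Q) \<le> R\<^sup>2 * (v \<bullet> (Q *v v))"
proof -
  have bilinear: "integrable M (\<lambda>\<omega>. (u \<bullet> \<xi> \<omega>) * (\<xi> \<omega> \<bullet> w))"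
    "(\<integral>\<omega>. (u \<bullet> \<xi> \<omega>) * (\<xi> \<omega> \<bullet> w) \<partial>M) = u \<bullet> (Q *v w)" for u w
    using integrable_bounded_linear[OF bounded_linear_quadratic_form int2, of u w]
      integral_bounded_linear[OF bounded_linear_quadratic_form int2, of u w]
    by (simp_all add: cov inner_outer_mult_vec)
  have int_fourth: "integrable M (\<lambda>\<omega>. (v \<bullet> \<xi> \<omega>)\<^sup>2 * (\<xi> \<omega> \<bullet> \<xi> \<omega>))"
    using integrable_bounded_linear[OF bounded_linear_quadratic_form int4, of v v]
    by (simp add: inner_outer_outer_mult_vec)
  have fourth_le: "(\<integral>\<omega>. (v \<bullet> \<xi> \<omega>)\<^sup>2 * (\<xi> \<omega> \<bullet> \<xi> \<omega>) \<partial>M) \<le> R\<^sup>2 * (v \<bullet> (Q *v v))"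
    using integral_bounded_linear[OF bounded_linear_quadratic_form int4, of v v] fourth
    by (simp add: inner_outer_outer_mult_vec loewner_le_iff flip: scaleR_matrix_vector_assoc)
  show "0 \<le> v \<bullet> (Q *v v)"
    using bilinear(2)[of v v, symmetric] by (simp add: inner_commute flip: power2_eq_square)
  define w where "w = v v* Q"
  have a_square: "a \<omega> \<bullet> a \<omega>
      = w \<bullet> w - 2 * ((v \<bullet> \<xi> \<omega>) * (\<xi> \<omega> \<bullet> w)) + (v \<bullet> \<xi> \<omega>)\<^sup>2 * (\<xi> \<omega> \<bullet> \<xi> \<omega>)" for \<omega>
    unfolding a_def vector_matrix_mult_diff_outer w_def
    by (simp add: inner_commute power2_eq_square algebra_simps)
  show "integrable M (\<lambda>\<omega>. a \<omega> \<bullet> a \<omega>)"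
    unfolding a_square using bilinear(1) int_fourth by auto
  have "v \<bullet> (Q *v w) = w \<bullet> w" by (simp add: w_def dot_lmul_matrix[symmetric])
  then have a_moment: "(\<integral>\<omega>. a \<omega> \<bullet> a \<omega> \<partial>M)
      = (\<integral>\<omega>. (v \<bullet> \<xi> \<omega>)\<^sup>2 * (\<xi> \<omega> \<bullet> \<xi> \<omega>) \<partial>M) - w \<bullet> w"
    unfolding a_square using bilinear[of v w] int_fourth by (simp add: prob_space)
  show "(\<integral>\<omega>. a \<omega> \<bullet> a \<omega> \<partial>M) \<le> R\<^sup>2 * (v \<bullet> (Q *v v))"
    using a_moment fourth_le inner_ge_zero[of w] by linarith
  have "0 \<le> (\<integral>\<omega>. a \<omega> \<bullet> a \<omega> \<partial>M)" by simp
  then show "(v v* Q) \<bullet> (v v* Q) \<le> R\<^sup>2 * (v \<bullet> (Q *v v))"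
    using a_moment fourth_le by (simp add: w_def)
qed

section \<open>The noise recursion\<close>

lemma stepsize_pos: "0 < g0 \<Longrightarrow> 0 < stepsize g0 L t"
  by (simp add: stepsize_def)

lemma stepsize_le: "0 < g0 \<Longrightarrow> stepsize g0 L t \<le> g0"
  by (simp add: stepsize_def divide_le_eq mult_le_cancel_left1)

lemma stepsize_contraction:
  fixes \<gamma> g0 R q n x :: real
  assumes q: "0 \<le> q" and n: "n \<le> R\<^sup>2 * q" and \<gamma>: "0 < \<gamma>" "\<gamma> \<le> g0" and g0R: "g0 * R\<^sup>2 \<le> 1/4"
  shows "g0 * (x - 2 * \<gamma> * q + \<gamma>\<^sup>2 * n) + \<gamma>\<^sup>2 * q \<le> g0 * x"
proof -
  have "g0 * n \<le> g0 * R\<^sup>2 * q" using n \<gamma> by (simp add: mult_left_mono mult.assoc)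
  also have "\<dots> \<le> q / 4" using g0R q by (simp add: mult_right_mono[of _ "1/4" q, simplified])
  finally have "\<gamma> * (\<gamma> * (g0 * n)) \<le> \<gamma> * (\<gamma> * q) / 4"
    using \<gamma> by (simp add: mult_left_mono)
  moreover have "\<gamma> * (\<gamma> * q) \<le> \<gamma> * (g0 * q)" using \<gamma> q by (simp add: mult_right_mono)
  moreover have "0 \<le> \<gamma> * (g0 * q)" using \<gamma> q by simp
  moreover have "g0 * (x - 2 * \<gamma> * q + \<gamma>\<^sup>2 * n) + \<gamma>\<^sup>2 * q - g0 * x
      = \<gamma> * (\<gamma> * (g0 * n)) + \<gamma> * (\<gamma> * q) - 2 * (\<gamma> * (g0 * q))"
    by (simp add: power2_eq_square algebra_simps)
  ultimately show ?thesis by linarith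
qed

lemma rho_cong_history:
  assumes "\<forall>s\<in>{1..u}. xi s \<omega> = xi' s \<omega>' \<and> ze s \<omega> = ze' s \<omega>'"
  shows "rho g Q xi ze k u \<omega> = rho g Q xi' ze' k u \<omega>'"
  using assms
proof (induction u arbitrary: k)
  case (Suc u)
  then have "rho g Q xi ze j u \<omega> = rho g Q xi' ze' j u \<omega>'" for j by auto
  with Suc.prems show ?case by (auto split: nat.split)
qed simp

lemma borel_measurable_rho:
  assumes "\<And>s. s \<in> {1..u} \<Longrightarrow> xi s \<in> borel_measurable N"
    and "\<And>s. s \<in> {1..u} \<Longrightarrow> ze s \<in> borel_measurable N"
  shows "rho g Q xi ze k u \<in> borel_measurable N"
  using assms
proof (induction u arbitrary: k)
  case 0
  have "rho g Q xi ze k 0 = (\<lambda>\<omega>. 0)" by (simp add: fun_eq_iff)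
  then show ?case by simp
next
  case (Suc u)
  then have [measurable]: "rho g Q xi ze j u \<in> borel_measurable N" for j by auto
  have [measurable]: "xi (Suc u) \<in> borel_measurable N" "ze (Suc u) \<in> borel_measurable N"
    using Suc.prems by auto
  show ?case
  proof (cases k)
    case 0
    then have "rho g Q xi ze k (Suc u) = (\<lambda>\<omega>. (mat 1 - g (Suc u) *\<^sub>R Q) *v rho g Q xi ze k u \<omega>
        + g (Suc u) *\<^sub>R ze (Suc u) \<omega>)" by (simp add: fun_eq_iff)
    then show ?thesis by (simp only:) measurable
  next
    case (Suc j)
    then have "rho g Q xi ze k (Suc u) = (\<lambda>\<omega>. (mat 1 - g (Suc u) *\<^sub>R Q) *v rho g Q xi ze k u \<omega>
        + g (Suc u) *\<^sub>R ((Q - outer (xi (Suc u) \<omega>) (xi (Suc u) \<omega>)) *v rho g Q xi ze j u \<omega>))"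
      by (simp add: fun_eq_iff)
    then show ?thesis by (simp only:) measurable
  qed
qed

lemma inner_rho_Suc:
  "v \<bullet> rho g Q xi ze k (Suc u) \<omega> = (v - g (Suc u) *\<^sub>R (v v* Q)) \<bullet> rho g Q xi ze k u \<omega>
     + g (Suc u) * (v \<bullet> zetak g Q xi ze k (Suc u) \<omega>)"
proof -
  have "v \<bullet> ((mat 1 - g (Suc u) *\<^sub>R Q) *v x) = (v - g (Suc u) *\<^sub>R (v v* Q)) \<bullet> x" for x
    by (simp add: vector_matrix_mult_diff_rdistrib vector_scaleR_matrix_ac flip: dot_lmul_matrix)
  then show ?thesis by (cases k) (simp_all add: zetak_def inner_add_right)
qed

locale noise_recursion = prob_space M for M :: "'a measure" +
  fixes xi ze :: "nat \<Rightarrow> 'a \<Rightarrow> real^'n"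
    and Q :: "real^'n^'n"
    and R sigma g0 :: real
    and L :: nat
  assumes meas_xi: "\<And>t. t \<in> {1..L} \<Longrightarrow> xi t \<in> borel_measurable M"
    and meas_ze: "\<And>t. t \<in> {1..L} \<Longrightarrow> ze t \<in> borel_measurable M"
    and indep: "indep_vars (\<lambda>_. borel) (\<lambda>t \<omega>. (xi t \<omega>, ze t \<omega>)) {1..L}"
    and int_xi2: "\<And>t. t \<in> {1..L} \<Longrightarrow> integrable M (\<lambda>\<omega>. outer (xi t \<omega>) (xi t \<omega>))"
    and int_xi4: "\<And>t. t \<in> {1..L} \<Longrightarrow>
       integrable M (\<lambda>\<omega>. outer (xi t \<omega>) (xi t \<omega>) ** outer (xi t \<omega>) (xi t \<omega>))"
    and int_ze: "\<And>t. t \<in> {1..L} \<Longrightarrow> integrable M (ze t)"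
    and int_ze2: "\<And>t. t \<in> {1..L} \<Longrightarrow> integrable M (\<lambda>\<omega>. outer (ze t \<omega>) (ze t \<omega>))"
    and cov: "\<And>t. t \<in> {1..L} \<Longrightarrow> (\<integral>\<omega>. outer (xi t \<omega>) (xi t \<omega>) \<partial>M) = Q"
    and mean0: "\<And>t. t \<in> {1..L} \<Longrightarrow> (\<integral>\<omega>. ze t \<omega> \<partial>M) = 0"
    and fourth: "\<And>t. t \<in> {1..L} \<Longrightarrow>
       loewner_le (\<integral>\<omega>. outer (xi t \<omega>) (xi t \<omega>) ** outer (xi t \<omega>) (xi t \<omega>) \<partial>M) (R^2 *\<^sub>R Q)"
    and noise: "\<And>t. t \<in> {1..L} \<Longrightarrow>
       loewner_le (\<integral>\<omega>. outer (ze t \<omega>) (ze t \<omega>) \<partial>M) (sigma^2 *\<^sub>R Q)"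
    and g0_pos: "g0 > 0"
    and g0R: "g0 * R^2 \<le> 1/4"
begin

abbreviation \<gamma> :: "nat \<Rightarrow> real" where "\<gamma> \<equiv> stepsize g0 L"
abbreviation \<rho> :: "nat \<Rightarrow> nat \<Rightarrow> 'a \<Rightarrow> real^'n" where "\<rho> \<equiv> rho \<gamma> Q xi ze"
abbreviation \<zeta> :: "nat \<Rightarrow> nat \<Rightarrow> 'a \<Rightarrow> real^'n" where "\<zeta> \<equiv> zetak \<gamma> Q xi ze"

lemma borel_measurable_\<rho>: "u \<le> L \<Longrightarrow> \<rho> k u \<in> borel_measurable M"
  by (intro borel_measurable_rho meas_xi meas_ze) auto

lemma borel_measurable_\<zeta>:
  assumes u: "Suc u \<le> L"
  shows "\<zeta> k (Suc u) \<in> borel_measurable M"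
proof -
  note [measurable] = borel_measurable_\<rho> meas_xi[of "Suc u"] meas_ze[of "Suc u"]
  show ?thesis using u by (cases k) (simp_all add: zetak_def[abs_def])
qed

(* The data strictly before time t as one random element of the path space, and rho evaluated on
   a path.  Since rho^k_u factors through past t for u < t, its independence from the data at time t
   follows from indep_var_restrict. *)
definition past :: "nat \<Rightarrow> 'a \<Rightarrow> nat \<Rightarrow> (real^'n) \<times> (real^'n)" where
  "past t \<omega> = (\<lambda>s\<in>{1..<t}. (xi s \<omega>, ze s \<omega>))"

definition rho_path :: "nat \<Rightarrow> nat \<Rightarrow> (nat \<Rightarrow> (real^'n) \<times> (real^'n)) \<Rightarrow> real^'n" where
  "rho_path k u = rho \<gamma> Q (\<lambda>s y. fst (y s)) (\<lambda>s y. snd (y s)) k u"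

lemma \<rho>_eq_rho_path_past: "u < t \<Longrightarrow> \<rho> k u \<omega> = rho_path k u (past t \<omega>)"
  unfolding rho_path_def by (rule rho_cong_history) (auto simp: past_def)

lemma borel_measurable_rho_path[measurable]:
  "rho_path k u \<in> borel_measurable (PiM {1..<Suc u} (\<lambda>_. borel))"
  unfolding rho_path_def
proof (rule borel_measurable_rho)
  fix s assume s: "s \<in> {1..u}"
  have component: "(\<lambda>y::nat \<Rightarrow> (real^'n) \<times> (real^'n). y s) \<in> PiM {1..<Suc u} (\<lambda>_. borel) \<rightarrow>\<^sub>M borel \<Otimes>\<^sub>M borel"
    unfolding borel_prod by (rule measurable_component_singleton) (use s in auto)
  show "(\<lambda>y::nat \<Rightarrow> (real^'n) \<times> (real^'n). fst (y s)) \<in> borel_measurable (PiM {1..<Suc u} (\<lambda>_. borel))"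
    using measurable_compose[OF component measurable_fst] by simp
  show "(\<lambda>y::nat \<Rightarrow> (real^'n) \<times> (real^'n). snd (y s)) \<in> borel_measurable (PiM {1..<Suc u} (\<lambda>_. borel))"
    using measurable_compose[OF component measurable_snd] by simp
qed

lemma indep_past_present:
  assumes t: "t \<in> {1..L}" and f: "f \<in> borel_measurable (PiM {1..<t} (\<lambda>_. borel))"
    and h: "h \<in> borel_measurable borel"
  shows "indep_var borel (\<lambda>\<omega>. f (past t \<omega>)) borel (\<lambda>\<omega>. h (xi t \<omega>, ze t \<omega>))"
proof -
  have "indep_var (PiM {1..<t} (\<lambda>_. borel)) (past t) (PiM {t} (\<lambda>_. borel))
      (\<lambda>\<omega>. \<lambda>s\<in>{t}. (xi s \<omega>, ze s \<omega>))"
    unfolding past_def using t by (intro indep_var_restrict[OF indep]) auto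
  moreover have "(\<lambda>y. h (y t)) \<in> borel_measurable (PiM {t} (\<lambda>_. borel))"
    using h by measurable
  ultimately have "indep_var borel (f \<circ> past t) borel ((\<lambda>y. h (y t)) \<circ> (\<lambda>\<omega>. \<lambda>s\<in>{t}. (xi s \<omega>, ze s \<omega>)))"
    by (rule indep_var_compose[OF _ f])
  then show ?thesis by (simp add: comp_def)
qed

lemma indep_past_xi:
  assumes "t \<in> {1..L}" and "f \<in> borel_measurable (PiM {1..<t} (\<lambda>_. borel))"
    and [measurable]: "h \<in> borel_measurable borel"
  shows "indep_var borel (\<lambda>\<omega>. f (past t \<omega>)) borel (\<lambda>\<omega>. h (xi t \<omega>))"
proof -
  have "(\<lambda>p::(real^'n) \<times> (real^'n). h (fst p)) \<in> borel_measurable borel"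
    unfolding borel_prod[symmetric] by measurable
  from indep_past_present[OF assms(1,2) this] show ?thesis by simp
qed

lemma indep_past_ze:
  assumes "t \<in> {1..L}" and "f \<in> borel_measurable (PiM {1..<t} (\<lambda>_. borel))"
  shows "indep_var borel (\<lambda>\<omega>. f (past t \<omega>)) borel (ze t)"
proof -
  have "(\<lambda>p::(real^'n) \<times> (real^'n). snd p) \<in> borel_measurable borel"
    unfolding borel_prod[symmetric] by measurable
  from indep_past_present[OF assms this] show ?thesis by simp
qed

lemma second_moment_\<zeta>:
  assumes u: "Suc u \<le> L"
    and \<rho>_u: "\<And>j. second_moment_le M (\<rho> j u) ((sigma\<^sup>2 * g0^(j+1) * R^(2*j)) *\<^sub>R mat 1)"
  shows "second_moment_le M (\<zeta> k (Suc u)) ((sigma\<^sup>2 * g0^k * R^(2*k)) *\<^sub>R Q)"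
proof (cases k)
  case 0
  have t: "Suc u \<in> {1..L}" using u by simp
  show ?thesis
    using 0 second_moment_le_of_outer[OF meas_ze[OF t] int_ze2[OF t] noise[OF t]]
    by (simp add: zetak_def[abs_def])
next
  case (Suc j)
  have t: "Suc u \<in> {1..L}" using u by simp
  define c where "c = sigma\<^sup>2 * g0^(j+1) * R^(2*j)"
  have c: "0 \<le> c" using g0_pos by (simp add: c_def power_mult)
  show ?thesis
  proof (rule second_moment_leI)
    show "\<zeta> k (Suc u) \<in> borel_measurable M" by (rule borel_measurable_\<zeta>[OF u])
    fix v
    define a where "a \<omega> = v v* (Q - outer (xi (Suc u) \<omega>) (xi (Suc u) \<omega>))" for \<omega>
    note a = covariance_defect_second_moment[OF meas_xi[OF t] int_xi2[OF t] int_xi4[OF t] cov[OF t]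
        fourth[OF t], of v, folded a_def]
    have inner_eq: "v \<bullet> \<zeta> k (Suc u) \<omega> = a \<omega> \<bullet> \<rho> j u \<omega>" for \<omega>
      using Suc by (simp add: zetak_def a_def dot_lmul_matrix)
    have "indep_var borel (\<lambda>\<omega>. rho_path j u (past (Suc u) \<omega>)) borel a"
      using indep_past_xi[OF t borel_measurable_rho_path, of "\<lambda>x. v v* (Q - outer x x)"]
      by (simp add: a_def[abs_def])
    moreover have "\<rho> j u = (\<lambda>\<omega>. rho_path j u (past (Suc u) \<omega>))"
      by (simp add: fun_eq_iff \<rho>_eq_rho_path_past)
    ultimately have indep: "indep_var borel (\<rho> j u) borel a" by simp
    have "integrable M a"
      using integral_covariance_defect_eq_0(1)[OF int_xi2[OF t] cov[OF t]] by (simp add: a_def[abs_def])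
    note moment = indep_var_inner_square_le[OF indep \<rho>_u[of j, folded c_def]
        borel_measurable_integrable[OF this] a(2)]
    show "integrable M (\<lambda>\<omega>. (v \<bullet> \<zeta> k (Suc u) \<omega>)\<^sup>2)"
      unfolding inner_eq by (rule moment(1))
    have "(\<integral>\<omega>. (v \<bullet> \<zeta> k (Suc u) \<omega>)\<^sup>2 \<partial>M) \<le> c * (\<integral>\<omega>. a \<omega> \<bullet> a \<omega> \<partial>M)"
      unfolding inner_eq by (rule moment(2))
    also have "\<dots> \<le> c * (R\<^sup>2 * (v \<bullet> (Q *v v)))" using a(3) c by (rule mult_left_mono)
    also have "\<dots> = v \<bullet> (((sigma\<^sup>2 * g0^k * R^(2*k)) *\<^sub>R Q) *v v)"
      using Suc by (simp add: c_def power2_eq_square flip: scaleR_matrix_vector_assoc)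
    finally show "(\<integral>\<omega>. (v \<bullet> \<zeta> k (Suc u) \<omega>)\<^sup>2 \<partial>M) \<le> v \<bullet> (((sigma\<^sup>2 * g0^k * R^(2*k)) *\<^sub>R Q) *v v)" .
  qed
qed

lemma integral_\<rho>_\<zeta>_eq_0:
  assumes u: "Suc u \<le> L"
    and \<rho>_u: "\<And>j. second_moment_le M (\<rho> j u) ((sigma\<^sup>2 * g0^(j+1) * R^(2*j)) *\<^sub>R mat 1)"
  shows "integrable M (\<lambda>\<omega>. (w \<bullet> \<rho> k u \<omega>) * (v \<bullet> \<zeta> k (Suc u) \<omega>))"
    and "(\<integral>\<omega>. (w \<bullet> \<rho> k u \<omega>) * (v \<bullet> \<zeta> k (Suc u) \<omega>) \<partial>M) = 0"
proof -
  have t: "Suc u \<in> {1..L}" and uL: "u \<le> L" using u by simp_all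
  note [measurable] = borel_measurable_\<rho>[OF uL]
  have past_eq: "\<rho> j u \<omega> = rho_path j u (past (Suc u) \<omega>)" for j \<omega>
    by (rule \<rho>_eq_rho_path_past) simp
  obtain A Y :: "'a \<Rightarrow> real^'n" where
    prod_eq: "\<And>\<omega>. (w \<bullet> \<rho> k u \<omega>) * (v \<bullet> \<zeta> k (Suc u) \<omega>) = A \<omega> \<bullet> Y \<omega>"
    and indep: "indep_var borel Y borel A"
    and "integrable M Y" "integrable M A" "(\<integral>\<omega>. A \<omega> \<partial>M) = 0"
  proof (cases k)
    case 0
    define Y where "Y \<omega> = (w \<bullet> \<rho> k u \<omega>) *\<^sub>R v" for \<omega>
    have eq: "(w \<bullet> \<rho> k u \<omega>) * (v \<bullet> \<zeta> k (Suc u) \<omega>) = ze (Suc u) \<omega> \<bullet> Y \<omega>" for \<omega>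
      using 0 by (simp add: Y_def zetak_def inner_commute)
    have "(\<lambda>y. (w \<bullet> rho_path k u y) *\<^sub>R v) \<in> borel_measurable (PiM {1..<Suc u} (\<lambda>_. borel))"
      by measurable
    from indep_past_ze[OF t this] have indep: "indep_var borel Y borel (ze (Suc u))"
      by (simp add: Y_def[abs_def] past_eq)
    have "integrable M (\<lambda>\<omega>. w \<bullet> \<rho> k u \<omega>)"
      by (rule square_integrable_imp_integrable[OF _ second_moment_le_integrable[OF \<rho>_u[of k]]]) measurable
    then have "integrable M Y"
      unfolding Y_def by (rule integrable_scaleR_left)
    then show ?thesis by (rule that[OF eq indep _ int_ze[OF t] mean0[OF t]])
  next
    case (Suc j)
    define Y where "Y \<omega> = (w \<bullet> \<rho> k u \<omega>) *\<^sub>R \<rho> j u \<omega>" for \<omega>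
    define a where "a \<omega> = v v* (Q - outer (xi (Suc u) \<omega>) (xi (Suc u) \<omega>))" for \<omega>
    have eq: "(w \<bullet> \<rho> k u \<omega>) * (v \<bullet> \<zeta> k (Suc u) \<omega>) = a \<omega> \<bullet> Y \<omega>" for \<omega>
      using Suc by (simp add: Y_def a_def zetak_def dot_lmul_matrix)
    have "(\<lambda>y. (w \<bullet> rho_path k u y) *\<^sub>R rho_path j u y) \<in> borel_measurable (PiM {1..<Suc u} (\<lambda>_. borel))"
      by measurable
    from indep_past_xi[OF t this, of "\<lambda>x. v v* (Q - outer x x)"]
    have indep: "indep_var borel Y borel a"
      by (simp add: Y_def[abs_def] a_def[abs_def] past_eq)
    have a_mean: "integrable M a" "(\<integral>\<omega>. a \<omega> \<partial>M) = 0"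
      using integral_covariance_defect_eq_0[OF int_xi2[OF t] cov[OF t], of v]
      by (simp_all add: a_def[abs_def])
    have "integrable M Y"
      unfolding Y_def
      by (intro integrable_vecI)
        (use second_moment_le_integrable_inner_mult[OF \<rho>_u[of k] \<rho>_u[of j], of w "axis _ 1"] in
          \<open>simp add: inner_axis'\<close>)
    then show ?thesis by (rule that[OF eq indep _ a_mean])
  qed
  then show "integrable M (\<lambda>\<omega>. (w \<bullet> \<rho> k u \<omega>) * (v \<bullet> \<zeta> k (Suc u) \<omega>))"
    and "(\<integral>\<omega>. (w \<bullet> \<rho> k u \<omega>) * (v \<bullet> \<zeta> k (Suc u) \<omega>) \<partial>M) = 0"
    unfolding prod_eq using indep_var_integral_inner_eq_0[OF indep] by simp_all
qed

lemma second_moment_\<rho>_Suc: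
  assumes u: "Suc u \<le> L"
    and \<rho>_u: "\<And>j. second_moment_le M (\<rho> j u) ((sigma\<^sup>2 * g0^(j+1) * R^(2*j)) *\<^sub>R mat 1)"
  shows "second_moment_le M (\<rho> k (Suc u)) ((sigma\<^sup>2 * g0^(k+1) * R^(2*k)) *\<^sub>R mat 1)"
proof (rule second_moment_leI)
  have t: "Suc u \<in> {1..L}" using u by simp
  show "\<rho> k (Suc u) \<in> borel_measurable M" by (rule borel_measurable_\<rho>[OF u])
  fix v
  define c where "c = sigma\<^sup>2 * g0^k * R^(2*k)"
  define s where "s = \<gamma> (Suc u)"
  define w where "w = v - s *\<^sub>R (v v* Q)"
  define X where "X \<omega> = w \<bullet> \<rho> k u \<omega>" for \<omega>
  define Z where "Z \<omega> = v \<bullet> \<zeta> k (Suc u) \<omega>" for \<omega>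
  have c: "0 \<le> c" using g0_pos by (simp add: c_def power_mult)
  have s: "0 < s" "s \<le> g0"
    using stepsize_pos[OF g0_pos] stepsize_le[OF g0_pos] by (simp_all add: s_def)
  note \<xi> = covariance_defect_second_moment[OF meas_xi[OF t] int_xi2[OF t] int_xi4[OF t] cov[OF t] fourth[OF t],
      of v]
  have split: "(v \<bullet> \<rho> k (Suc u) \<omega>)\<^sup>2 = (X \<omega>)\<^sup>2 + (2 * s) * (X \<omega> * Z \<omega>) + s\<^sup>2 * (Z \<omega>)\<^sup>2" for \<omega>
    unfolding inner_rho_Suc by (simp add: X_def Z_def w_def s_def power2_eq_square algebra_simps)
  have X: "integrable M (\<lambda>\<omega>. (X \<omega>)\<^sup>2)" "(\<integral>\<omega>. (X \<omega>)\<^sup>2 \<partial>M) \<le> c * g0 * (w \<bullet> w)"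
    using second_moment_leD(2,3)[OF \<rho>_u[of k], of w]
    by (simp_all add: X_def c_def mult_ac flip: scaleR_matrix_vector_assoc)
  have Z: "integrable M (\<lambda>\<omega>. (Z \<omega>)\<^sup>2)" "(\<integral>\<omega>. (Z \<omega>)\<^sup>2 \<partial>M) \<le> c * (v \<bullet> (Q *v v))"
    using second_moment_leD(2,3)[OF second_moment_\<zeta>[OF u \<rho>_u], of v k]
    by (simp_all add: Z_def c_def flip: scaleR_matrix_vector_assoc)
  note XZ = integral_\<rho>_\<zeta>_eq_0[OF u \<rho>_u, of w k v, folded X_def Z_def]
  show "integrable M (\<lambda>\<omega>. (v \<bullet> \<rho> k (Suc u) \<omega>)\<^sup>2)"
    unfolding split using X(1) Z(1) XZ(1) by simp
  have w: "w \<bullet> w = v \<bullet> v - 2 * s * (v \<bullet> (Q *v v)) + s\<^sup>2 * ((v v* Q) \<bullet> (v v* Q))"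
    by (simp add: w_def inner_diff_left inner_diff_right inner_commute power2_eq_square
        algebra_simps flip: dot_lmul_matrix)
  have "(\<integral>\<omega>. (v \<bullet> \<rho> k (Suc u) \<omega>)\<^sup>2 \<partial>M)
      = (\<integral>\<omega>. (X \<omega>)\<^sup>2 \<partial>M) + s\<^sup>2 * (\<integral>\<omega>. (Z \<omega>)\<^sup>2 \<partial>M)"
    unfolding split using X(1) Z(1) XZ by simp
  also have "\<dots> \<le> c * g0 * (w \<bullet> w) + s\<^sup>2 * (c * (v \<bullet> (Q *v v)))"
    using X(2) mult_left_mono[OF Z(2), of "s\<^sup>2"] by simp
  also have "\<dots> \<le> c * g0 * (v \<bullet> v)"
    unfolding w using mult_left_mono[OF stepsize_contraction[OF \<xi>(1,4) s g0R, of "v \<bullet> v"] c]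
    by (simp add: algebra_simps)
  also have "\<dots> = v \<bullet> (((sigma\<^sup>2 * g0^(k+1) * R^(2*k)) *\<^sub>R mat 1) *v v)"
    by (simp add: c_def mult_ac flip: scaleR_matrix_vector_assoc)
  finally show "(\<integral>\<omega>. (v \<bullet> \<rho> k (Suc u) \<omega>)\<^sup>2 \<partial>M)
      \<le> v \<bullet> (((sigma\<^sup>2 * g0^(k+1) * R^(2*k)) *\<^sub>R mat 1) *v v)" .
qed

lemma second_moment_\<rho>:
  "u \<le> L \<Longrightarrow> second_moment_le M (\<rho> k u) ((sigma\<^sup>2 * g0^(k+1) * R^(2*k)) *\<^sub>R mat 1)"
proof (induction u arbitrary: k)
  case 0
  have "\<rho> k 0 = (\<lambda>\<omega>. 0)" by (simp add: fun_eq_iff)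
  moreover have "0 \<le> sigma\<^sup>2 * g0^(k+1) * R^(2*k)" using g0_pos by (simp add: power_mult)
  ultimately show ?case
    by (auto intro!: second_moment_leI simp flip: scaleR_matrix_vector_assoc)
next
  case (Suc u)
  then show ?case by (intro second_moment_\<rho>_Suc Suc.IH) simp_all
qed

lemma second_moments:
  assumes "t \<in> {1..L}"
  shows "second_moment_le M (\<zeta> k t) ((sigma\<^sup>2 * g0^k * R^(2*k)) *\<^sub>R Q)"
    and "second_moment_le M (\<rho> k t) ((sigma\<^sup>2 * g0^(k+1) * R^(2*k)) *\<^sub>R mat 1)"
proof -
  obtain u where t: "t = Suc u" and u: "Suc u \<le> L" using assms by (cases t) auto
  show "second_moment_le M (\<zeta> k t) ((sigma\<^sup>2 * g0^k * R^(2*k)) *\<^sub>R Q)"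
    unfolding t using u by (intro second_moment_\<zeta> second_moment_\<rho>) simp_all
  show "second_moment_le M (\<rho> k t) ((sigma\<^sup>2 * g0^(k+1) * R^(2*k)) *\<^sub>R mat 1)"
    using assms by (intro second_moment_\<rho>) simp
qed

end

theorem lemmaD6:
  fixes M :: "'a measure"
    and xi ze :: "nat \<Rightarrow> 'a \<Rightarrow> real^'n"
    and Q :: "real^'n^'n"
    and R sigma g0 :: real
    and L :: nat
  assumes "prob_space M"
    and meas_xi: "\<And>t. t \<in> {1..L} \<Longrightarrow> xi t \<in> borel_measurable M"
    and meas_ze: "\<And>t. t \<in> {1..L} \<Longrightarrow> ze t \<in> borel_measurable M"
    and indep: "prob_space.indep_vars M (\<lambda>_. borel) (\<lambda>t \<omega>. (xi t \<omega>, ze t \<omega>)) {1..L}"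
    and int_xi2: "\<And>t. t \<in> {1..L} \<Longrightarrow> integrable M (\<lambda>\<omega>. outer (xi t \<omega>) (xi t \<omega>))"
    and int_xi4: "\<And>t. t \<in> {1..L} \<Longrightarrow>
       integrable M (\<lambda>\<omega>. outer (xi t \<omega>) (xi t \<omega>) ** outer (xi t \<omega>) (xi t \<omega>))"
    and int_ze: "\<And>t. t \<in> {1..L} \<Longrightarrow> integrable M (ze t)"
    and int_ze2: "\<And>t. t \<in> {1..L} \<Longrightarrow> integrable M (\<lambda>\<omega>. outer (ze t \<omega>) (ze t \<omega>))"
    and cov: "\<And>t. t \<in> {1..L} \<Longrightarrow> (\<integral>\<omega>. outer (xi t \<omega>) (xi t \<omega>) \<partial>M) = Q"
    and mean0: "\<And>t. t \<in> {1..L} \<Longrightarrow> (\<integral>\<omega>. ze t \<omega> \<partial>M) = 0"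
    and fourth: "\<And>t. t \<in> {1..L} \<Longrightarrow>
       loewner_le (\<integral>\<omega>. outer (xi t \<omega>) (xi t \<omega>) ** outer (xi t \<omega>) (xi t \<omega>) \<partial>M) (R^2 *\<^sub>R Q)"
    and noise: "\<And>t. t \<in> {1..L} \<Longrightarrow>
       loewner_le (\<integral>\<omega>. outer (ze t \<omega>) (ze t \<omega>) \<partial>M) (sigma^2 *\<^sub>R Q)"
    and g0_pos: "g0 > 0"
    and g0R: "g0 * R^2 \<le> 1/4"
  shows "\<forall>k t. t \<in> {1..L} \<longrightarrow>
     (let g = stepsize g0 L;
          Z = zetak g Q xi ze k t;
          P = rho g Q xi ze k t
      in integrable M (\<lambda>\<omega>. outer (Z \<omega>) (Z \<omega>))
       \<and> loewner_le (\<integral>\<omega>. outer (Z \<omega>) (Z \<omega>) \<partial>M) ((sigma^2 * g0^k * R^(2*k)) *\<^sub>R Q)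
       \<and> integrable M (\<lambda>\<omega>. outer (P \<omega>) (P \<omega>))
       \<and> loewner_le (\<integral>\<omega>. outer (P \<omega>) (P \<omega>) \<partial>M) ((sigma^2 * g0^(k+1) * R^(2*k)) *\<^sub>R mat 1))"
proof -
  interpret noise_recursion M xi ze Q R sigma g0 L
    by (intro noise_recursion.intro noise_recursion_axioms.intro) (use assms in auto)
  show ?thesis
    unfolding Let_def
    using second_moment_le_outer[OF second_moments(1)] second_moment_le_outer[OF second_moments(2)]
    by blast
qed

end
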